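(* Let $\mathscr{A}\in\mathbb{R}^{n\times n\times n_3}$, $\mathscr{V}\in\mathbb{R}^{n\times s\times n_3}$, and suppose $m$ steps of the tensor tubal-global Arnoldi process described in the context have been run (without breakdown). Then $$\mathscr{A}\star\mathbb{V}_m=\mathbb{V}_m\star(\mathscr{H}_m\circledast\mathscr{I}_{ssn_3})+\mathscr{V}_{m+1}\star((\mathbf{h}_{m+1,m}\star\mathscr{E}_m)\circledast\mathscr{I}_{ssn_3}),$$ $$\mathbb{V}_m^T\diamondsuit(\mathscr{A}\star\mathbb{V}_m)=\mathscr{H}_m,\qquad \mathscr{A}\star\mathbb{V}_m=\mathbb{V}_{m+1}\star(\widetilde{\mathscr{H}}_m\circledast\mathscr{I}_{ssn_3}),$$ $$\mathbb{V}_{m+1}^T\diamondsuit(\mathscr{A}\star\mathbb{V}_m)=\widetilde{\mathscr{H}}_m,\qquad \mathbb{V}_m^T\diamondsuit\mathbb{V}_m=\mathscr{I}_{mmn_3}.$$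
   Context: All tensors are real third-order arrays. $\widehat{\mathscr{A}}=\mathscr{A}\times_3F_{n_3}$ denotes the tensor obtained by applying the discrete Fourier transform ($F_{n_3}$ with entries $\omega^{(i-1)(j-1)}$, $\omega=e^{-2\pi\mathrm{i}/n_3}$) to each tube; its frontal slices $\hat A^{(k)}$ are the Fourier slices. T-product: $\mathscr{A}\star\mathscr{B}$ has Fourier slices $\hat A^{(k)}\hat B^{(k)}$. Transpose $\mathscr{A}^T$: transpose each frontal slice and reverse the order of frontal slices $2,\dots,n_3$. $\mathscr{I}_{nnn_3}$: first frontal slice $I_n$, others zero. A tube is an element of $\mathbb{R}^{1\times1\times n_3}$; $\mathbf{e}$ has entries $(1,0,\dots,0)$, $\mathbf{o}$ is the zero tube. For a tube $\mathbf{a}$, $\mathbf{a}\divideontimes\mathscr{B}$ has $(i,j)$ tube $\mathbf{a}\star\mathscr{B}(i,j,:)$. T-Kronecker product $\mathscr{A}\circledast\mathscr{B}$: Fourier slices $\hat A^{(k)}\otimes\hat B^{(k)}$. T-trace: tube whose $k$-th Fourier slice is the trace of the $k$-th Fourier slice. Tubal inner product $\langle\mathscr{X},\mathscr{Y}\rangle_T=\text{T-trace}(\mathscr{X}^T\star\mathscr{Y})$. T-diamond product: for $\mathscr{X}=[\mathscr{X}_1,\dots,\mathscr{X}_p]$, $\mathscr{Y}=[\mathscr{Y}_1,\dots,\mathscr{Y}_\ell]$ with blocks in $\mathbb{R}^{n\times s\times n_3}$ (concatenated along mode 2), $\mathscr{X}^T\diamondsuit\mathscr{Y}\in\mathbb{R}^{p\times\ell\times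 n_3}$ has $(i,j)$ tube $\langle\mathscr{X}_i,\mathscr{Y}_j\rangle_T$. Normalization of $\mathscr{W}$: $\mathbf{a}$ is the tube with $k$-th Fourier coefficient $\|\hat W^{(k)}\|_F$ and $\mathscr{Q}$ has Fourier slices $\hat W^{(k)}/\|\hat W^{(k)}\|_F$; output $[\mathscr{Q},\mathbf{a}]$. Tubal-global Arnoldi process: $[\mathscr{V}_1,\mathbf{r}_{1,1}]=\mathrm{Normalization}(\mathscr{V})$; for $j=1,\dots,m$: $\mathscr{W}=\mathscr{A}\star\mathscr{V}_j$; for $i=1,\dots,j$: $\mathbf{h}_{i,j}=\langle\mathscr{V}_i,\mathscr{W}\rangle_T$, $\mathscr{W}\leftarrow\mathscr{W}-\mathbf{h}_{i,j}\divideontimes\mathscr{V}_i$; then $[\mathscr{V}_{j+1},\mathbf{h}_{j+1,j}]=\mathrm{Normalization}(\mathscr{W})$. Notation: $\mathbb{V}_m=[\mathscr{V}_1,\dots,\mathscr{V}_m]\in\mathbb{R}^{n\times sm\times n_3}$, $\mathbb{V}_{m+1}=[\mathbb{V}_m,\mathscr{V}_{m+1}]$, $\mathscr{A}\star\mathbb{V}_m=[\mathscr{A}\star\mathscr{V}_1,\dots,\mathscr{A}\star\mathscr{V}_m]$. $\widetilde{\mathscr{H}}_m\in\mathbb{R}^{(m+1)\times m\times n_3}$ is the Hessenberg tensor whose $(i,j)$ tube is $\mathbf{h}_{i,j}$ for $i\le j+1$ and $\mathbf{o}$ otherwise; $\mathscr{H}_m\in\mathbb{R}^{m\times m\times n_3}$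 is obtained by deleting its last horizontal slice; $\mathscr{E}_m=[\mathbf{o},\dots,\mathbf{o},\mathbf{e}]\in\mathbb{R}^{1\times m\times n_3}$. *)

theory Defs
  imports Complex_Main
begin

text \<open>A third-order real tensor is a function
  nat \<Rightarrow> nat \<Rightarrow> nat \<Rightarrow> real (row, column, tube index),
  all indices 0-based; dimensions are passed explicitly and only entries with
  indices in range are meaningful. A tube is a tensor whose only meaningful
  entries are at (0,0,k).\<close>

type_synonym tensor = "nat \<Rightarrow> nat \<Rightarrow> nat \<Rightarrow> real"
type_synonym ctensor = "nat \<Rightarrow> nat \<Rightarrow> nat \<Rightarrow> complex"

definition fft :: "nat \<Rightarrow> tensor \<Rightarrow> ctensor" where
  "fft n3 A = (\<lambda>i j k. \<Sum>t<n3. complex_of_real (A i j t) * cis (- 2 * pi * real k * real t / real n3))"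

definition fromF :: "nat \<Rightarrow> ctensor \<Rightarrow> tensor" where
  "fromF n3 X = (\<lambda>i j t. Re ((1 / of_nat n3) * (\<Sum>k<n3. X i j k * cis (2 * pi * real k * real t / real n3))))"

definition tprod :: "nat \<Rightarrow> nat \<Rightarrow> tensor \<Rightarrow> tensor \<Rightarrow> tensor" where
  "tprod n3 p A B = fromF n3 (\<lambda>i j k. \<Sum>l<p. fft n3 A i l k * fft n3 B l j k)"

definition tadd :: "tensor \<Rightarrow> tensor \<Rightarrow> tensor" where
  "tadd A B = (\<lambda>i j k. A i j k + B i j k)"

definition tsub :: "tensor \<Rightarrow> tensor \<Rightarrow> tensor" where
  "tsub A B = (\<lambda>i j k. A i j k - B i j k)"

definition ttrans :: "nat \<Rightarrow> tensor \<Rightarrow> tensor" where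
  "ttrans n3 A = (\<lambda>i j k. A j i ((n3 - k) mod n3))"

definition tid :: "nat \<Rightarrow> tensor" where
  "tid n = (\<lambda>i j k. if i = j \<and> i < n \<and> k = 0 then 1 else 0)"

definition tscal :: "nat \<Rightarrow> tensor \<Rightarrow> tensor \<Rightarrow> tensor" where
  "tscal n3 a B = fromF n3 (\<lambda>i j k. fft n3 a 0 0 k * fft n3 B i j k)"

text \<open>T-Kronecker product of A (p x q x n3) and B (r x s x n3): Fourier slices are
  Kronecker products; entry ((i r + i'), (j s + j')) = hat A(i,j,k) * hat B(i',j',k).\<close>
definition tkron :: "nat \<Rightarrow> nat \<Rightarrow> nat \<Rightarrow> tensor \<Rightarrow> tensor \<Rightarrow> tensor" where
  "tkron n3 r s A B = fromF n3 (\<lambda>I J k. fft n3 A (I div r) (J div s) k * fft n3 B (I mod r) (J mod s) k)"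

definition ttrace :: "nat \<Rightarrow> nat \<Rightarrow> tensor \<Rightarrow> tensor" where
  "ttrace n3 n X = fromF n3 (\<lambda>_ _ k. \<Sum>i<n. fft n3 X i i k)"

definition tinner :: "nat \<Rightarrow> nat \<Rightarrow> nat \<Rightarrow> tensor \<Rightarrow> tensor \<Rightarrow> tensor" where
  "tinner n3 n s X Y = ttrace n3 s (tprod n3 n (ttrans n3 X) Y)"

definition blk :: "nat \<Rightarrow> nat \<Rightarrow> tensor \<Rightarrow> tensor" where
  "blk s i X = (\<lambda>a b k. X a (i * s + b) k)"

definition tdiamond :: "nat \<Rightarrow> nat \<Rightarrow> nat \<Rightarrow> tensor \<Rightarrow> tensor \<Rightarrow> tensor" where
  "tdiamond n3 n s X Y = (\<lambda>i j k. tinner n3 n s (blk s i X) (blk s j Y) 0 0 k)"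

definition fro_slice :: "nat \<Rightarrow> nat \<Rightarrow> nat \<Rightarrow> tensor \<Rightarrow> nat \<Rightarrow> real" where
  "fro_slice n3 p q W k = sqrt (\<Sum>i<p. \<Sum>j<q. (cmod (fft n3 W i j k))\<^sup>2)"

definition norm_tube :: "nat \<Rightarrow> nat \<Rightarrow> nat \<Rightarrow> tensor \<Rightarrow> tensor" where
  "norm_tube n3 p q W = fromF n3 (\<lambda>_ _ k. complex_of_real (fro_slice n3 p q W k))"

definition norm_Q :: "nat \<Rightarrow> nat \<Rightarrow> nat \<Rightarrow> tensor \<Rightarrow> tensor" where
  "norm_Q n3 p q W = fromF n3 (\<lambda>i j k. fft n3 W i j k / complex_of_real (fro_slice n3 p q W k))"

definition teq :: "nat \<Rightarrow> nat \<Rightarrow> nat \<Rightarrow> tensor \<Rightarrow> tensor \<Rightarrow> bool" where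
  "teq p q n3 A B \<longleftrightarrow> (\<forall>i<p. \<forall>j<q. \<forall>k<n3. A i j k = B i j k)"

text \<open>Vs j is the paper's V_j (j \<ge> 1), h i j is the tube h_{i,j} (1-based indices),
  W j i is the working tensor W in step j after subtracting the first i projections.\<close>
definition arnoldi_run ::
  "nat \<Rightarrow> nat \<Rightarrow> nat \<Rightarrow> tensor \<Rightarrow> tensor \<Rightarrow> nat \<Rightarrow>
   (nat \<Rightarrow> tensor) \<Rightarrow> (nat \<Rightarrow> nat \<Rightarrow> tensor) \<Rightarrow> (nat \<Rightarrow> nat \<Rightarrow> tensor) \<Rightarrow> bool" where
  "arnoldi_run n3 n s A V m Vs h W \<longleftrightarrow>
     (\<forall>k<n3. fro_slice n3 n s V k \<noteq> 0) \<and>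
     Vs 1 = norm_Q n3 n s V \<and>
     (\<forall>j\<in>{1..m}.
        W j 0 = tprod n3 n A (Vs j) \<and>
        (\<forall>i\<in>{1..j}. h i j = tinner n3 n s (Vs i) (W j (i - 1)) \<and>
                     W j i = tsub (W j (i - 1)) (tscal n3 (h i j) (Vs i))) \<and>
        (\<forall>k<n3. fro_slice n3 n s (W j j) k \<noteq> 0) \<and>
        Vs (j + 1) = norm_Q n3 n s (W j j) \<and>
        h (j + 1) j = norm_tube n3 n s (W j j))"

text \<open>\<bbbV>_m = [V_1, ..., V_m] in R^{n x sm x n3}.\<close>
definition VV :: "nat \<Rightarrow> (nat \<Rightarrow> tensor) \<Rightarrow> nat \<Rightarrow> tensor" where
  "VV s Vs m = (\<lambda>a b k. if b < s * m then Vs (b div s + 1) a (b mod s) k else 0)"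

text \<open>Hessenberg tensor tilde H_m ((m+1) x m x n3) and H_m (m x m x n3), 0-based entries.\<close>
definition Htil :: "(nat \<Rightarrow> nat \<Rightarrow> tensor) \<Rightarrow> nat \<Rightarrow> tensor" where
  "Htil h m = (\<lambda>i j k. if i \<le> j + 1 \<and> i < m + 1 \<and> j < m then h (i + 1) (j + 1) 0 0 k else 0)"

definition Hm :: "(nat \<Rightarrow> nat \<Rightarrow> tensor) \<Rightarrow> nat \<Rightarrow> tensor" where
  "Hm h m = (\<lambda>i j k. if i < m then Htil h m i j k else 0)"

definition Em :: "nat \<Rightarrow> tensor" where
  "Em m = (\<lambda>i j k. if i = 0 \<and> j = m - 1 \<and> k = 0 then 1 else 0)"

end

theory Submission
  imports Defs
begin

(* The DFT along tubes turns every tubal operation into the corresponding matrix operation on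
   each Fourier slice (the tensor transpose becoming the conjugate transpose, the T-trace the
   trace), and a real tensor is determined by its Fourier slices.  In slice k the tubal-global
   Arnoldi process is therefore the ordinary global Arnoldi process, i.e. modified Gram-Schmidt
   in the Frobenius inner product, applied to the slices of A and V.  Hence the slices of
   V_1, ..., V_(m+1) are Frobenius-orthonormal and the slice of A * V_j is
   sum_(i <= j+1) h_(i,j) V_i; read block-column by block-column these are the five identities.
   The first identity is the third one with the last row h_(m+1,m) E_m of the Hessenberg
   tensor split off. *)

section \<open>Discrete Fourier transform along tubes\<close>

(* The conjugate of the paper's omega: fft uses its conjugate powers, fromF its powers. *)
definition dft_root :: "nat \<Rightarrow> complex" where
  "dft_root n = cis (2 * pi / real n)"

lemma dft_root_pow: "dft_root n ^ k = cis (2 * pi * real k / real n)"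
  by (simp add: dft_root_def DeMoivre mult.commute)

lemma dft_root_nonzero [simp]: "dft_root n \<noteq> 0"
  by (simp add: dft_root_def)

lemma norm_dft_root_pow [simp]: "norm (dft_root n ^ k) = 1"
  by (simp add: dft_root_pow)

lemma dft_root_pow_n: "0 < n \<Longrightarrow> dft_root n ^ n = 1"
  by (simp add: dft_root_pow)

lemma dft_root_pow_inj:
  assumes "k < n" "l < n"
  shows "dft_root n ^ k = dft_root n ^ l \<longleftrightarrow> k = l"
  using inj_onD[OF bij_betw_imp_inj_on[OF bij_betw_roots_unity[of n]]] assms
  by (auto simp: dft_root_pow)

lemma dft_root_orthogonal:
  assumes "k < n" "l < n"
  shows "(\<Sum>t<n. dft_root n ^ (k * t) * cnj (dft_root n ^ (l * t))) = (if k = l then of_nat n else 0)"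
proof -
  define z where "z = dft_root n ^ k / dft_root n ^ l"
  have "dft_root n ^ (k * t) * cnj (dft_root n ^ (l * t)) = z ^ t" for t
    by (subst divide_conv_cnj[symmetric]) (simp_all add: z_def power_divide flip: power_mult)
  then have "(\<Sum>t<n. dft_root n ^ (k * t) * cnj (dft_root n ^ (l * t))) = (\<Sum>t<n. z ^ t)"
    by simp
  moreover have "z ^ n = 1"
  proof -
    have "(dft_root n ^ j) ^ n = (dft_root n ^ n) ^ j" for j
      by (simp add: mult.commute flip: power_mult)
    then show ?thesis
      using assms by (simp add: z_def power_divide dft_root_pow_n)
  qed
  moreover have "z = 1 \<longleftrightarrow> k = l"
    using dft_root_pow_inj[OF assms] by (simp add: z_def)
  ultimately show ?thesis
    by (auto simp: geometric_sum)
qed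

definition neg_mod :: "nat \<Rightarrow> nat \<Rightarrow> nat" where
  "neg_mod n k = (n - k) mod n"

lemma neg_mod_lt: "0 < n \<Longrightarrow> neg_mod n k < n"
  by (simp add: neg_mod_def)

lemma neg_mod_neg_mod: "k < n \<Longrightarrow> neg_mod n (neg_mod n k) = k"
  by (cases "k = 0") (auto simp: neg_mod_def)

lemma bij_betw_neg_mod: "bij_betw (neg_mod n) {..<n} {..<n}"
  by (rule bij_betw_byWitness[where f' = "neg_mod n"]) (auto simp: neg_mod_neg_mod neg_mod_lt)

lemma dft_root_pow_neg_mod:
  assumes "k < n"
  shows "dft_root n ^ neg_mod n k = cnj (dft_root n ^ k)"
proof (cases "k = 0")
  case False
  with assms have "dft_root n ^ neg_mod n k * dft_root n ^ k = 1"
    by (simp add: neg_mod_def dft_root_pow_n flip: power_add)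
  then have "dft_root n ^ neg_mod n k = 1 / dft_root n ^ k"
    by (simp add: field_simps)
  then show ?thesis
    by (simp add: divide_conv_cnj del: complex_cnj_power)
qed (simp add: neg_mod_def)

definition dft :: "nat \<Rightarrow> (nat \<Rightarrow> complex) \<Rightarrow> nat \<Rightarrow> complex" where
  "dft n x k = (\<Sum>t<n. x t * cnj (dft_root n ^ (k * t)))"

definition idft :: "nat \<Rightarrow> (nat \<Rightarrow> complex) \<Rightarrow> nat \<Rightarrow> complex" where
  "idft n X t = (\<Sum>k<n. X k * dft_root n ^ (k * t)) / of_nat n"

lemma idft_dft:
  assumes "t < n"
  shows "idft n (dft n x) t = x t"
proof -
  have "(\<Sum>k<n. dft n x k * dft_root n ^ (k * t))
      = (\<Sum>u<n. x u * (\<Sum>k<n. dft_root n ^ (t * k) * cnj (dft_root n ^ (u * k))))"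
    unfolding dft_def sum_distrib_left sum_distrib_right
    by (subst sum.swap) (simp add: mult_ac)
  also have "\<dots> = (\<Sum>u<n. if u = t then of_nat n * x t else 0)"
    using assms by (intro sum.cong refl) (auto simp: dft_root_orthogonal simp del: complex_cnj_power)
  finally show ?thesis
    using assms by (simp add: idft_def)
qed

lemma dft_idft:
  assumes "k < n"
  shows "dft n (idft n X) k = X k"
proof -
  have "(\<Sum>t<n. (\<Sum>l<n. X l * dft_root n ^ (l * t)) * cnj (dft_root n ^ (k * t)))
      = (\<Sum>l<n. X l * (\<Sum>t<n. dft_root n ^ (l * t) * cnj (dft_root n ^ (k * t))))"
    unfolding sum_distrib_left sum_distrib_right
    by (subst sum.swap) (simp add: mult_ac)
  also have "\<dots> = (\<Sum>l<n. if l = k then of_nat n * X k else 0)"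
    using assms by (intro sum.cong refl) (auto simp: dft_root_orthogonal simp del: complex_cnj_power)
  finally show ?thesis
    using assms by (simp add: dft_def idft_def flip: sum_divide_distrib)
qed

definition conj_symmetric :: "nat \<Rightarrow> (nat \<Rightarrow> complex) \<Rightarrow> bool" where
  "conj_symmetric n X \<longleftrightarrow> (\<forall>k<n. X (neg_mod n k) = cnj (X k))"

lemma dft_root_pow_neg_mod_mult:
  "k < n \<Longrightarrow> dft_root n ^ (neg_mod n k * t) = cnj (dft_root n ^ (k * t))"
  by (simp add: power_mult dft_root_pow_neg_mod)

lemma conj_symmetric_dft_real: "conj_symmetric n (dft n (\<lambda>t. of_real (x t)))"
  unfolding conj_symmetric_def dft_def
  by (simp add: dft_root_pow_neg_mod_mult del: complex_cnj_power)

lemma idft_real: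
  assumes "conj_symmetric n X"
  shows "of_real (Re (idft n X t)) = idft n X t"
proof -
  have "cnj (\<Sum>k<n. X k * dft_root n ^ (k * t)) = (\<Sum>k<n. X (neg_mod n k) * dft_root n ^ (neg_mod n k * t))"
    using assms by (simp add: conj_symmetric_def dft_root_pow_neg_mod_mult del: complex_cnj_power)
  also have "\<dots> = (\<Sum>k<n. X k * dft_root n ^ (k * t))"
    by (rule sum.reindex_bij_betw[OF bij_betw_neg_mod])
  finally have "cnj (idft n X t) = idft n X t"
    by (simp add: idft_def)
  then show ?thesis
    by (simp add: Reals_cnj_iff)
qed

lemma fft_eq_dft: "fft n A i j = dft n (\<lambda>t. of_real (A i j t))"
  unfolding fft_def dft_def dft_root_pow cis_cnj
  by (intro ext sum.cong refl) (simp add: field_simps)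

lemma fromF_eq_Re_idft: "fromF n X i j t = Re (idft n (X i j) t)"
  unfolding fromF_def idft_def dft_root_pow
  by (simp add: field_simps)

lemma fromF_fft: "t < n \<Longrightarrow> fromF n (fft n A) i j t = A i j t"
  by (simp add: fromF_eq_Re_idft fft_eq_dft idft_dft)

(* fromF keeps only the real part of the inverse transform, so it inverts fft only on
   conjugate-symmetric data. *)
lemma fft_fromF: "conj_symmetric n (X i j) \<Longrightarrow> k < n \<Longrightarrow> fft n (fromF n X) i j k = X i j k"
  by (simp add: fft_eq_dft fromF_eq_Re_idft idft_real dft_idft)

lemma fft_neg_mod: "k < n \<Longrightarrow> fft n A i j (neg_mod n k) = cnj (fft n A i j k)"
  using conj_symmetric_dft_real unfolding conj_symmetric_def fft_eq_dft by blast

lemma teq_fftI: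
  assumes "\<And>i j k. i < p \<Longrightarrow> j < q \<Longrightarrow> k < n3 \<Longrightarrow> fft n3 A i j k = fft n3 B i j k"
  shows "teq p q n3 A B"
  unfolding teq_def
proof (intro allI impI)
  fix i j t assume "i < p" "j < q" "t < n3"
  then have "fromF n3 (fft n3 A) i j t = fromF n3 (fft n3 B) i j t"
    unfolding fromF_def using assms by simp
  with \<open>t < n3\<close> show "A i j t = B i j t"
    by (simp add: fromF_fft)
qed

lemma teq_trans: "teq p q n3 A B \<Longrightarrow> teq p q n3 B C \<Longrightarrow> teq p q n3 A C"
  by (simp add: teq_def)

section \<open>Tensor operations on Fourier slices\<close>

lemma fft_tprod: "k < n3 \<Longrightarrow> fft n3 (tprod n3 p A B) i j k = (\<Sum>l<p. fft n3 A i l k * fft n3 B l j k)"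
  unfolding tprod_def by (rule fft_fromF) (simp_all add: conj_symmetric_def fft_neg_mod)

lemma fft_tadd: "fft n3 (tadd A B) i j k = fft n3 A i j k + fft n3 B i j k"
  unfolding fft_def tadd_def by (simp add: sum.distrib distrib_right)

lemma fft_tsub: "fft n3 (tsub A B) i j k = fft n3 A i j k - fft n3 B i j k"
  unfolding fft_def tsub_def by (simp add: sum_subtractf left_diff_distrib)

lemma fft_ttrans: "fft n3 (ttrans n3 A) i j k = cnj (fft n3 A j i k)"
proof -
  have "fft n3 (ttrans n3 A) i j k = (\<Sum>t<n3. of_real (A j i (neg_mod n3 t)) * cnj (dft_root n3 ^ (k * t)))"
    unfolding fft_eq_dft dft_def ttrans_def neg_mod_def ..
  also have "\<dots> = (\<Sum>u<n3. of_real (A j i (neg_mod n3 (neg_mod n3 u)))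
                         * cnj (dft_root n3 ^ (k * neg_mod n3 u)))"
    by (rule sum.reindex_bij_betw[OF bij_betw_neg_mod, symmetric])
  also have "\<dots> = (\<Sum>u<n3. of_real (A j i u) * dft_root n3 ^ (k * u))"
    by (intro sum.cong refl)
      (simp add: neg_mod_neg_mod mult.commute[of k] dft_root_pow_neg_mod_mult del: complex_cnj_power)
  also have "\<dots> = cnj (fft n3 A j i k)"
    by (simp add: fft_eq_dft dft_def del: complex_cnj_power)
  finally show ?thesis .
qed

lemma fft_tscal: "k < n3 \<Longrightarrow> fft n3 (tscal n3 a B) i j k = fft n3 a 0 0 k * fft n3 B i j k"
  unfolding tscal_def by (rule fft_fromF) (simp_all add: conj_symmetric_def fft_neg_mod)

lemma fft_tkron:
  "k < n3 \<Longrightarrow> fft n3 (tkron n3 r s A B) i j k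
     = fft n3 A (i div r) (j div s) k * fft n3 B (i mod r) (j mod s) k"
  unfolding tkron_def by (rule fft_fromF) (simp_all add: conj_symmetric_def fft_neg_mod)

lemma fft_ttrace: "k < n3 \<Longrightarrow> fft n3 (ttrace n3 p X) i j k = (\<Sum>l<p. fft n3 X l l k)"
  unfolding ttrace_def by (rule fft_fromF) (simp_all add: conj_symmetric_def fft_neg_mod)

lemma fro_slice_neg_mod: "k < n3 \<Longrightarrow> fro_slice n3 p q W (neg_mod n3 k) = fro_slice n3 p q W k"
  unfolding fro_slice_def by (simp add: fft_neg_mod)

lemma fft_norm_tube: "k < n3 \<Longrightarrow> fft n3 (norm_tube n3 p q W) i j k = of_real (fro_slice n3 p q W k)"
  unfolding norm_tube_def by (rule fft_fromF) (simp_all add: conj_symmetric_def fro_slice_neg_mod)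

lemma fft_norm_Q:
  "k < n3 \<Longrightarrow> fft n3 (norm_Q n3 p q W) i j k = fft n3 W i j k / of_real (fro_slice n3 p q W k)"
  unfolding norm_Q_def by (rule fft_fromF) (simp_all add: conj_symmetric_def fft_neg_mod fro_slice_neg_mod)

lemma fft_tid: "0 < n3 \<Longrightarrow> fft n3 (tid p) i j k = (if i = j \<and> i < p then 1 else 0)"
  unfolding fft_def tid_def
  by (cases "i = j"; cases "i < p")
    (auto simp: if_distrib[of of_real] if_distrib[of "\<lambda>x. x * _"] cong: if_cong)

lemma fft_Em: "0 < n3 \<Longrightarrow> fft n3 (Em m) i j k = (if i = 0 \<and> j = m - 1 then 1 else 0)"
  unfolding fft_def Em_def
  by (cases "i = 0 \<and> j = m - 1")
    (auto simp: if_distrib[of of_real] if_distrib[of "\<lambda>x. x * _"] cong: if_cong)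

lemma fft_VV: "fft n3 (VV s Vs m) a b k = (if b < s * m then fft n3 (Vs (b div s + 1)) a (b mod s) k else 0)"
  unfolding fft_def VV_def by simp

lemma fft_blk: "fft n3 (blk s i X) a b k = fft n3 X a (i * s + b) k"
  unfolding fft_def blk_def ..

lemma fft_Htil:
  "fft n3 (Htil h m) i j k = (if i \<le> j + 1 \<and> i < m + 1 \<and> j < m then fft n3 (h (i + 1) (j + 1)) 0 0 k else 0)"
  unfolding fft_def Htil_def by (cases "i \<le> j + 1 \<and> i < m + 1 \<and> j < m") auto

lemma fft_Hm: "fft n3 (Hm h m) i j k = (if i < m then fft n3 (Htil h m) i j k else 0)"
  unfolding fft_def Hm_def by simp

section \<open>Global Arnoldi process for the Frobenius inner product\<close>

definition frob_inner :: "nat \<Rightarrow> nat \<Rightarrow> (nat \<Rightarrow> nat \<Rightarrow> complex) \<Rightarrow> (nat \<Rightarrow> nat \<Rightarrow> complex) \<Rightarrow> complex" where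
  "frob_inner p q X Y = (\<Sum>a<p. \<Sum>b<q. cnj (X a b) * Y a b)"

lemma frob_inner_cong:
  "(\<And>a b. a < p \<Longrightarrow> b < q \<Longrightarrow> X a b = X' a b) \<Longrightarrow> (\<And>a b. a < p \<Longrightarrow> b < q \<Longrightarrow> Y a b = Y' a b)
    \<Longrightarrow> frob_inner p q X Y = frob_inner p q X' Y'"
  unfolding frob_inner_def by (intro sum.cong refl) auto

lemma frob_inner_commute: "frob_inner p q Y X = cnj (frob_inner p q X Y)"
  unfolding frob_inner_def by (simp add: mult.commute)

lemma frob_inner_diff_right:
  "frob_inner p q X (\<lambda>a b. Y a b - Z a b) = frob_inner p q X Y - frob_inner p q X Z"
  unfolding frob_inner_def by (simp add: right_diff_distrib sum_subtractf)

lemma frob_inner_sum_right: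
  "frob_inner p q X (\<lambda>a b. \<Sum>l\<in>L. c l * Z l a b) = (\<Sum>l\<in>L. c l * frob_inner p q X (Z l))"
  unfolding frob_inner_def sum_distrib_left
  by (subst sum.swap, rule sum.cong[OF refl], subst sum.swap) (simp add: mult_ac)

lemma frob_inner_divide_left:
  "frob_inner p q (\<lambda>a b. X a b / of_real c) Y = frob_inner p q X Y / of_real c"
  unfolding frob_inner_def by (simp add: sum_divide_distrib)

lemma frob_inner_divide_right:
  "frob_inner p q X (\<lambda>a b. Y a b / of_real c) = frob_inner p q X Y / of_real c"
  unfolding frob_inner_def by (simp add: sum_divide_distrib)

lemma frob_inner_self: "frob_inner p q X X = of_real (\<Sum>a<p. \<Sum>b<q. (cmod (X a b))\<^sup>2)"
  unfolding frob_inner_def of_real_sum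
  by (intro sum.cong refl) (subst complex_norm_square, simp add: mult.commute)

(* av j stands for the image of v j under the operator; no property of it is needed. *)
locale frobenius_arnoldi =
  fixes p q m :: nat
    and v av :: "nat \<Rightarrow> nat \<Rightarrow> nat \<Rightarrow> complex"
    and h :: "nat \<Rightarrow> nat \<Rightarrow> complex"
    and w :: "nat \<Rightarrow> nat \<Rightarrow> nat \<Rightarrow> nat \<Rightarrow> complex"
    and r :: "nat \<Rightarrow> real"
  assumes v1_unit: "frob_inner p q (v 1) (v 1) = 1"
    and w_first: "j \<in> {1..m} \<Longrightarrow> w j 0 = av j"
    and h_proj: "j \<in> {1..m} \<Longrightarrow> i \<in> {1..j} \<Longrightarrow> h i j = frob_inner p q (v i) (w j (i - 1))"
    and w_step: "j \<in> {1..m} \<Longrightarrow> i \<in> {1..j} \<Longrightarrow> w j i a b = w j (i - 1) a b - h i j * v i a b"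
    and r_nonzero: "j \<in> {1..m} \<Longrightarrow> r j \<noteq> 0"
    and r_norm: "j \<in> {1..m} \<Longrightarrow> frob_inner p q (w j j) (w j j) = of_real (r j ^ 2)"
    and v_next: "j \<in> {1..m} \<Longrightarrow> v (j + 1) a b = w j j a b / of_real (r j)"
    and h_next: "j \<in> {1..m} \<Longrightarrow> h (j + 1) j = of_real (r j)"
begin

lemma w_closed: "j \<in> {1..m} \<Longrightarrow> i \<le> j \<Longrightarrow> w j i a b = av j a b - (\<Sum>l=1..i. h l j * v l a b)"
  by (induction i) (auto simp: w_first w_step)

definition orthonormal_upto :: "nat \<Rightarrow> bool" where
  "orthonormal_upto J \<longleftrightarrow>
     (\<forall>i\<in>{1..J}. \<forall>i'\<in>{1..J}. frob_inner p q (v i) (v i') = (if i = i' then 1 else 0))"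

lemma frob_inner_v_combination:
  assumes "orthonormal_upto J" "i \<in> {1..J}" "L \<subseteq> {1..J}"
  shows "frob_inner p q (v i) (\<lambda>a b. \<Sum>l\<in>L. c l * v l a b) = (if i \<in> L then c i else 0)"
proof -
  have "finite L"
    using assms(3) finite_subset by blast
  have "frob_inner p q (v i) (\<lambda>a b. \<Sum>l\<in>L. c l * v l a b) = (\<Sum>l\<in>L. if l = i then c i else 0)"
    unfolding frob_inner_sum_right
    using assms unfolding orthonormal_upto_def by (intro sum.cong refl) auto
  with \<open>finite L\<close> show ?thesis
    by simp
qed

lemma frob_inner_v_w:
  assumes "orthonormal_upto j" "j \<in> {1..m}" "i \<in> {1..j}" "i' \<le> j"
  shows "frob_inner p q (v i) (w j i') = frob_inner p q (v i) (av j) - (if i \<le> i' then h i j else 0)"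
proof -
  have "w j i' = (\<lambda>a b. av j a b - (\<Sum>l=1..i'. h l j * v l a b))"
    using assms by (intro ext) (simp add: w_closed)
  then show ?thesis
    using assms by (simp add: frob_inner_diff_right frob_inner_v_combination)
qed

(* Once v 1, ..., v j are orthonormal, the modified and the classical Gram-Schmidt
   coefficients agree. *)
lemma h_eq_frob_inner_av:
  assumes "orthonormal_upto j" "j \<in> {1..m}" "i \<in> {1..j}"
  shows "h i j = frob_inner p q (v i) (av j)"
proof -
  have "i - 1 \<le> j" "\<not> i \<le> i - 1"
    using assms(3) by auto
  then show ?thesis
    using frob_inner_v_w[OF assms] assms by (simp add: h_proj)
qed

lemma orthonormal_upto_Suc:
  assumes "orthonormal_upto j" "j \<in> {1..m}"
  shows "orthonormal_upto (Suc j)"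
proof -
  have v_next_fun: "v (Suc j) = (\<lambda>a b. w j j a b / of_real (r j))"
    using assms v_next[of j] by (intro ext) simp
  have old_new: "frob_inner p q (v i) (v (Suc j)) = 0" if "i \<in> {1..j}" for i
    using frob_inner_v_w[OF assms that, of j] h_eq_frob_inner_av[OF assms that] that
    by (simp add: v_next_fun frob_inner_divide_right)
  have new_old: "frob_inner p q (v (Suc j)) (v i) = 0" if "i \<in> {1..j}" for i
    using old_new[OF that] by (subst frob_inner_commute) simp
  have new_new: "frob_inner p q (v (Suc j)) (v (Suc j)) = 1"
    using assms r_norm r_nonzero
    by (simp add: v_next_fun frob_inner_divide_left frob_inner_divide_right power2_eq_square)
  show ?thesis
    using assms(1) old_new new_old new_new
    unfolding orthonormal_upto_def by (auto simp: le_Suc_eq)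
qed

lemma orthonormal_upto_all: "orthonormal_upto (m + 1)"
proof -
  have "orthonormal_upto (Suc j)" if "j \<le> m" for j
    using that
  proof (induction j)
    case 0
    then show ?case
      using v1_unit by (simp add: orthonormal_upto_def)
  next
    case (Suc j)
    then show ?case
      using orthonormal_upto_Suc[of "Suc j"] by simp
  qed
  then show ?thesis
    by simp
qed

lemma orthonormal:
  "i \<in> {1..m + 1} \<Longrightarrow> i' \<in> {1..m + 1} \<Longrightarrow> frob_inner p q (v i) (v i') = (if i = i' then 1 else 0)"
  using orthonormal_upto_all unfolding orthonormal_upto_def by blast

lemma av_expansion: "j \<in> {1..m} \<Longrightarrow> av j a b = (\<Sum>l=1..j + 1. h l j * v l a b)"
  using w_closed[of j j a b] v_next[of j a b] h_next[of j] r_nonzero[of j] by simp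

lemma frob_inner_v_av:
  assumes "i \<in> {1..m + 1}" "j \<in> {1..m}"
  shows "frob_inner p q (v i) (av j) = (if i \<le> j + 1 then h i j else 0)"
proof -
  have "av j = (\<lambda>a b. \<Sum>l=1..j + 1. h l j * v l a b)"
    using assms by (intro ext) (simp add: av_expansion)
  moreover have "{1..j + 1} \<subseteq> {1..m + 1}"
    using assms(2) by auto
  ultimately show ?thesis
    using frob_inner_v_combination[OF orthonormal_upto_all assms(1)] assms(1)
    by (simp del: sum.cl_ivl_Suc)
qed

end


section \<open>Tubal-global Arnoldi relations\<close>

lemma fft_tinner:
  "k < n3 \<Longrightarrow> fft n3 (tinner n3 p q X Y) i j k = frob_inner p q (\<lambda>a b. fft n3 X a b k) (\<lambda>a b. fft n3 Y a b k)"
  by (simp add: tinner_def fft_ttrace fft_tprod fft_ttrans frob_inner_def sum.swap[of _ "{..<q}"])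

lemma fft_tdiamond:
  assumes "k < n3"
  shows "fft n3 (tdiamond n3 p q X Y) i j k
     = frob_inner p q (\<lambda>a b. fft n3 X a (i * q + b) k) (\<lambda>a b. fft n3 Y a (j * q + b) k)"
proof -
  have "fft n3 (tdiamond n3 p q X Y) i j k = fft n3 (tinner n3 p q (blk q i X) (blk q j Y)) 0 0 k"
    unfolding fft_def tdiamond_def ..
  with assms show ?thesis
    by (simp add: fft_tinner fft_blk)
qed

lemma frob_inner_fft_self:
  "frob_inner p q (\<lambda>a b. fft n3 W a b k) (\<lambda>a b. fft n3 W a b k) = of_real ((fro_slice n3 p q W k)\<^sup>2)"
  by (simp add: frob_inner_self fro_slice_def sum_nonneg)

lemma block_index_less:
  fixes j M c s :: nat
  assumes "j < M" "c < s"
  shows "j * s + c < s * M"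
proof -
  have "j * s + c < Suc j * s"
    using assms(2) by simp
  also have "\<dots> \<le> M * s"
    using assms(1) by (intro mult_le_mono1) simp
  finally show ?thesis
    by (simp add: mult.commute)
qed

lemma sum_lessThan_mult_blocks:
  fixes s M :: nat and g :: "nat \<Rightarrow> 'a :: comm_monoid_add"
  shows "(\<Sum>l<s * M. g l) = (\<Sum>j<M. \<Sum>c<s. g (j * s + c))"
proof -
  have "(\<Sum>l<s * M. g l) = (\<Sum>j<M. sum g {j * s..<j * s + s})"
    using sum.nat_group[of g s M] by (simp add: mult.commute)
  also have "\<dots> = (\<Sum>j<M. \<Sum>c<s. g (j * s + c))"
    using sum.shift_bounds_nat_ivl[of g 0 "j * s" s for j]
    by (simp add: add.commute atLeast0LessThan)
  finally show ?thesis .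
qed

lemma teq_fft_blockI:
  assumes "\<And>a j c k. a < p \<Longrightarrow> j < M \<Longrightarrow> c < s \<Longrightarrow> k < n3
             \<Longrightarrow> fft n3 A a (j * s + c) k = fft n3 B a (j * s + c) k"
  shows "teq p (s * M) n3 A B"
proof (rule teq_fftI)
  fix a b k assume "a < p" "b < s * M" "k < n3"
  then have "0 < s"
    by (cases s) auto
  with \<open>b < s * M\<close> have "b div s < M" "b mod s < s"
    by (auto simp: less_mult_imp_div_less mult.commute)
  from assms[OF \<open>a < p\<close> this \<open>k < n3\<close>] show "fft n3 A a b k = fft n3 B a b k"
    by simp
qed

lemma fft_VV_block: "j < M \<Longrightarrow> c < s \<Longrightarrow> fft n3 (VV s Vs M) a (j * s + c) k = fft n3 (Vs (j + 1)) a c k"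
  by (simp add: fft_VV block_index_less)

lemma fft_tprod_VV_block:
  "j < M \<Longrightarrow> c < s \<Longrightarrow> k < n3
    \<Longrightarrow> fft n3 (tprod n3 p A (VV s Vs M)) a (j * s + c) k = fft n3 (tprod n3 p A (Vs (j + 1))) a c k"
  by (simp add: fft_tprod fft_VV_block)

lemma fft_tprod_tkron_tid:
  "c < s \<Longrightarrow> k < n3
    \<Longrightarrow> fft n3 (tprod n3 s X (tkron n3 s s T (tid s))) a (j * s + c) k = fft n3 X a c k * fft n3 T 0 j k"
  by (simp add: fft_tprod fft_tkron fft_tid if_distrib[of "\<lambda>x. _ * x"] cong: if_cong)

lemma fft_VV_tkron_tid:
  "c < s \<Longrightarrow> k < n3
    \<Longrightarrow> fft n3 (tprod n3 (s * M) (VV s Vs M) (tkron n3 s s H (tid s))) a (j * s + c) k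
      = (\<Sum>i<M. fft n3 (Vs (i + 1)) a c k * fft n3 H i j k)"
  by (simp add: fft_tprod fft_tkron fft_tid sum_lessThan_mult_blocks fft_VV_block
      if_distrib[of "\<lambda>x. _ * x"] cong: if_cong)

lemma VV_Htil_split:
  "teq n (s * m) n3 (tprod n3 (s * (m + 1)) (VV s Vs (m + 1)) (tkron n3 s s (Htil h m) (tid s)))
     (tadd (tprod n3 (s * m) (VV s Vs m) (tkron n3 s s (Hm h m) (tid s)))
           (tprod n3 s (Vs (m + 1)) (tkron n3 s s (tprod n3 1 (h (m + 1) m) (Em m)) (tid s))))"
proof (rule teq_fft_blockI, goal_cases)
  case (1 a j c k)
  have last_row: "fft n3 (Htil h m) m j k = fft n3 (tprod n3 1 (h (m + 1) m) (Em m)) 0 j k"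
    using \<open>j < m\<close> \<open>k < n3\<close> by (auto simp: fft_Htil fft_tprod fft_Em)
  have "(\<Sum>i<m + 1. fft n3 (Vs (i + 1)) a c k * fft n3 (Htil h m) i j k)
      = (\<Sum>i<m. fft n3 (Vs (i + 1)) a c k * fft n3 (Hm h m) i j k)
        + fft n3 (Vs (m + 1)) a c k * fft n3 (tprod n3 1 (h (m + 1) m) (Em m)) 0 j k"
    by (simp add: fft_Hm last_row)
  with \<open>c < s\<close> \<open>k < n3\<close> show ?case
    using fft_VV_tkron_tid[OF \<open>c < s\<close> \<open>k < n3\<close>, where M = "m + 1"]
    by (simp add: fft_tadd fft_VV_tkron_tid fft_tprod_tkron_tid del: sum.lessThan_Suc)
qed

context
  fixes n3 n s m :: nat and A V :: tensor and Vs :: "nat \<Rightarrow> tensor" and h W :: "nat \<Rightarrow> nat \<Rightarrow> tensor"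
  assumes run: "arnoldi_run n3 n s A V m Vs h W"
begin

lemma arnoldi_run_stepD:
  assumes "j \<in> {1..m}"
  shows "W j 0 = tprod n3 n A (Vs j)"
    and "i \<in> {1..j} \<Longrightarrow> h i j = tinner n3 n s (Vs i) (W j (i - 1))"
    and "i \<in> {1..j} \<Longrightarrow> W j i = tsub (W j (i - 1)) (tscal n3 (h i j) (Vs i))"
    and "k < n3 \<Longrightarrow> fro_slice n3 n s (W j j) k \<noteq> 0"
    and "Vs (j + 1) = norm_Q n3 n s (W j j)"
    and "h (j + 1) j = norm_tube n3 n s (W j j)"
  using run assms unfolding arnoldi_run_def by blast+

lemma fourier_slice_arnoldi:
  assumes "k < n3"
  shows "frobenius_arnoldi n s m
           (\<lambda>j a b. fft n3 (Vs j) a b k) (\<lambda>j a b. fft n3 (tprod n3 n A (Vs j)) a b k)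
           (\<lambda>i j. fft n3 (h i j) 0 0 k) (\<lambda>j i a b. fft n3 (W j i) a b k)
           (\<lambda>j. fro_slice n3 n s (W j j) k)"
proof (unfold_locales, goal_cases)
  case 1
  have "Vs 1 = norm_Q n3 n s V" "fro_slice n3 n s V k \<noteq> 0"
    using run assms by (auto simp: arnoldi_run_def)
  with assms show ?case
    by (simp add: fft_norm_Q frob_inner_divide_left frob_inner_divide_right frob_inner_fft_self power2_eq_square)
next
  case (2 j)
  then show ?case
    using arnoldi_run_stepD(1)[of j] by simp
next
  case (3 j i)
  then show ?case
    using arnoldi_run_stepD(2)[of j i] assms by (simp add: fft_tinner)
next
  case (4 j i a b)
  then show ?case
    using arnoldi_run_stepD(3)[of j i] assms by (simp add: fft_tsub fft_tscal)
next
  case (5 j)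
  then show ?case
    using arnoldi_run_stepD(4)[of j k] assms by simp
next
  case (6 j)
  then show ?case
    by (simp add: frob_inner_fft_self)
next
  case (7 j a b)
  then show ?case
    using arnoldi_run_stepD(5)[of j] assms by (simp add: fft_norm_Q)
next
  case (8 j)
  then show ?case
    using arnoldi_run_stepD(6)[of j] assms by (simp add: fft_norm_tube)
qed

lemma arnoldi_relation:
  "teq n (s * m) n3 (tprod n3 n A (VV s Vs m))
     (tprod n3 (s * (m + 1)) (VV s Vs (m + 1)) (tkron n3 s s (Htil h m) (tid s)))"
proof (rule teq_fft_blockI, goal_cases)
  case (1 a j c k)
  have "fft n3 (tprod n3 n A (VV s Vs m)) a (j * s + c) k = fft n3 (tprod n3 n A (Vs (j + 1))) a c k"
    using \<open>j < m\<close> \<open>c < s\<close> \<open>k < n3\<close> by (rule fft_tprod_VV_block)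
  also have "\<dots> = (\<Sum>l=1..j + 2. fft n3 (h l (j + 1)) 0 0 k * fft n3 (Vs l) a c k)"
    using frobenius_arnoldi.av_expansion[OF fourier_slice_arnoldi[OF \<open>k < n3\<close>], of "j + 1" a c] \<open>j < m\<close> by simp
  also have "\<dots> = (\<Sum>i<j + 2. fft n3 (Vs (i + 1)) a c k * fft n3 (Htil h m) i j k)"
    using \<open>j < m\<close> by (simp add: sum.atLeast1_atMost_eq fft_Htil mult.commute)
  also have "\<dots> = (\<Sum>i<m + 1. fft n3 (Vs (i + 1)) a c k * fft n3 (Htil h m) i j k)"
    using \<open>j < m\<close> by (intro sum.mono_neutral_left) (auto simp: fft_Htil)
  also have "\<dots> = fft n3 (tprod n3 (s * (m + 1)) (VV s Vs (m + 1)) (tkron n3 s s (Htil h m) (tid s)))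
                      a (j * s + c) k"
    using fft_VV_tkron_tid[OF \<open>c < s\<close> \<open>k < n3\<close>, where M = "m + 1"] by (simp del: sum.lessThan_Suc)
  finally show ?case .
qed

lemma tdiamond_VV_AVV:
  assumes "M \<le> m + 1"
  shows "teq M m n3 (tdiamond n3 n s (VV s Vs M) (tprod n3 n A (VV s Vs m))) (Htil h m)"
proof (rule teq_fftI, goal_cases)
  case (1 i j k)
  have "fft n3 (tdiamond n3 n s (VV s Vs M) (tprod n3 n A (VV s Vs m))) i j k
      = frob_inner n s (\<lambda>a b. fft n3 (Vs (i + 1)) a b k)
          (\<lambda>a b. fft n3 (tprod n3 n A (Vs (j + 1))) a b k)"
    unfolding fft_tdiamond[OF \<open>k < n3\<close>]
    using \<open>i < M\<close> \<open>j < m\<close> \<open>k < n3\<close>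
    by (intro frob_inner_cong) (simp_all add: fft_VV_block fft_tprod_VV_block)
  also have "\<dots> = (if i \<le> j + 1 then fft n3 (h (i + 1) (j + 1)) 0 0 k else 0)"
    using frobenius_arnoldi.frob_inner_v_av[OF fourier_slice_arnoldi[OF \<open>k < n3\<close>], of "i + 1" "j + 1"]
      assms \<open>i < M\<close> \<open>j < m\<close> by simp
  also have "\<dots> = fft n3 (Htil h m) i j k"
    using assms \<open>i < M\<close> \<open>j < m\<close> by (simp add: fft_Htil)
  finally show ?case .
qed

lemma tdiamond_VV_VV: "teq m m n3 (tdiamond n3 n s (VV s Vs m) (VV s Vs m)) (tid m)"
proof (rule teq_fftI, goal_cases)
  case (1 i j k)
  have "fft n3 (tdiamond n3 n s (VV s Vs m) (VV s Vs m)) i j k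
      = frob_inner n s (\<lambda>a b. fft n3 (Vs (i + 1)) a b k) (\<lambda>a b. fft n3 (Vs (j + 1)) a b k)"
    unfolding fft_tdiamond[OF \<open>k < n3\<close>]
    using \<open>i < m\<close> \<open>j < m\<close> by (intro frob_inner_cong) (simp_all add: fft_VV_block)
  also have "\<dots> = fft n3 (tid m) i j k"
    using frobenius_arnoldi.orthonormal[OF fourier_slice_arnoldi[OF \<open>k < n3\<close>], of "i + 1" "j + 1"]
      \<open>i < m\<close> \<open>j < m\<close> \<open>k < n3\<close> by (simp add: fft_tid)
  finally show ?case .
qed

end

theorem proposition7:
  fixes n3 n s m :: nat
    and A V :: tensor
    and Vs :: "nat \<Rightarrow> tensor"
    and h W :: "nat \<Rightarrow> nat \<Rightarrow> tensor"
  assumes "n3 \<ge> 1" and "n \<ge> 1" and "s \<ge> 1" and "m \<ge> 1"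
    and "arnoldi_run n3 n s A V m Vs h W"
  shows
    "teq n (s * m) n3 (tprod n3 n A (VV s Vs m))
        (tadd (tprod n3 (s * m) (VV s Vs m) (tkron n3 s s (Hm h m) (tid s)))
              (tprod n3 s (Vs (m + 1))
                 (tkron n3 s s (tprod n3 1 (h (m + 1) m) (Em m)) (tid s))))
    \<and> teq m m n3 (tdiamond n3 n s (VV s Vs m) (tprod n3 n A (VV s Vs m))) (Hm h m)
    \<and> teq n (s * m) n3 (tprod n3 n A (VV s Vs m))
        (tprod n3 (s * (m + 1)) (VV s Vs (m + 1)) (tkron n3 s s (Htil h m) (tid s)))
    \<and> teq (m + 1) m n3 (tdiamond n3 n s (VV s Vs (m + 1)) (tprod n3 n A (VV s Vs m))) (Htil h m)
    \<and> teq m m n3 (tdiamond n3 n s (VV s Vs m) (VV s Vs m)) (tid m)"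
proof -
  note run = assms(5)
  have "teq m m n3 (tdiamond n3 n s (VV s Vs m) (tprod n3 n A (VV s Vs m))) (Hm h m)"
    using tdiamond_VV_AVV[OF run, of m] by (simp add: teq_def Hm_def)
  then show ?thesis
    using teq_trans[OF arnoldi_relation[OF run] VV_Htil_split] arnoldi_relation[OF run]
      tdiamond_VV_AVV[OF run order_refl] tdiamond_VV_VV[OF run]
    by blast
qed

end
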